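(* Let $n\ge 1$, let $x_1,\dots,x_n$ be distinct integers each greater than $1$, and let $D=\{1,0,x_1,\dots,x_n\}$. If $(T,s)$ is an optimal signed tree realizing $D$ and $ab$ is an edge of $T$ with $s(ab)=-$, then $sdeg(a)=sdeg(b)=0$.
   Context: A signed tree is a pair $(T,s)$ where $T$ is a finite tree and $s:E(T)\to\{+,-\}$. The signed degree $sdeg(v)$ of a vertex is the number of incident positive edges minus the number of incident negative edges. $(T,s)$ realizes $D$ if $D=\{sdeg(v):v\in V(T)\}$. $\sigma(D)=\min\{|V(T)|: \text{some signed tree }(T,s)\text{ realizes }D\}$, and a signed tree $(T,s)$ realizing $D$ is optimal if $|V(T)|=\sigma(D)$. *)

theory Defs
  imports Main
begin

definition is_tree :: "'a set \<Rightarrow> 'a set set \<Rightarrow> bool" where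
  "is_tree V E \<longleftrightarrow>
     finite V \<and> V \<noteq> {} \<and>
     (\<forall>e\<in>E. \<exists>u v. u \<in> V \<and> v \<in> V \<and> u \<noteq> v \<and> e = {u, v}) \<and>
     (\<forall>u\<in>V. \<forall>v\<in>V. (u, v) \<in> {(p, q). {p, q} \<in> E}\<^sup>*) \<and>
     card E = card V - 1"

text \<open>Signs: s e = True means positive, s e = False means negative.\<close>
definition sdeg :: "'a set set \<Rightarrow> ('a set \<Rightarrow> bool) \<Rightarrow> 'a \<Rightarrow> int" where
  "sdeg E s v = int (card {e\<in>E. v \<in> e \<and> s e}) - int (card {e\<in>E. v \<in> e \<and> \<not> s e})"

definition realizes :: "'a set \<Rightarrow> 'a set set \<Rightarrow> ('a set \<Rightarrow> bool) \<Rightarrow> int set \<Rightarrow> bool" where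
  "realizes V E s D \<longleftrightarrow> is_tree V E \<and> D = sdeg E s ` V"

text \<open>Minimum order of a signed tree realizing D (trees up to isomorphism, represented on nat).\<close>
definition sigma :: "int set \<Rightarrow> nat" where
  "sigma D = (LEAST k. \<exists>(V::nat set) E s. realizes V E s D \<and> card V = k)"

definition optimal :: "'a set \<Rightarrow> 'a set set \<Rightarrow> ('a set \<Rightarrow> bool) \<Rightarrow> int set \<Rightarrow> bool" where
  "optimal V E s D \<longleftrightarrow> realizes V E s D \<and> card V = sigma D"

end

theory Submission
  imports Defs
begin

(*
  Let X be the set of the x_i, S the sum of the x_i - 1, N the set of negative edges and Z the
  set of vertices of signed degree 0 of a tree realizing {0, 1} \<union> X on the vertex set V.
  Every edge adds 2 or -2 to the sum of the signed degrees, so the sum of sdeg v - 1 over V is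
  |V| - 2 - 4|N|. Each value of X is attained and every other vertex has signed degree 0 or 1,
  so that sum is also at least S - |Z|. A vertex of signed degree 0 lies on a negative edge,
  hence |Z| <= 2|N|, and altogether |V| >= S + 2 + 2|N|.
  Conversely, the path with signs +, -, + realizes {0, 1} on 4 vertices, and hanging x - 1 new
  positive leaves on a vertex of signed degree 1 adds the value x while keeping such a vertex;
  so sigma({0, 1} \<union> X) <= S + 4. In an optimal tree with a negative edge ab this forces
  |N| = 1 and |Z| >= 2, and since Z is covered by the single negative edge, Z = {a, b}.
*)

lemma is_tree_edgeE:
  assumes "is_tree V E" "e \<in> E"
  obtains u v where "u \<in> V" "v \<in> V" "u \<noteq> v" "e = {u, v}"
  using assms unfolding is_tree_def by blast

lemma is_tree_finite: "is_tree V E \<Longrightarrow> finite V"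
  unfolding is_tree_def by blast

lemma is_tree_card_edges: "is_tree V E \<Longrightarrow> card E = card V - 1"
  unfolding is_tree_def by blast

lemma is_tree_connected: "is_tree V E \<Longrightarrow> u \<in> V \<Longrightarrow> v \<in> V \<Longrightarrow> (u, v) \<in> {(p, q). {p, q} \<in> E}\<^sup>*"
  unfolding is_tree_def by blast

lemma is_tree_edge_subset: "is_tree V E \<Longrightarrow> e \<in> E \<Longrightarrow> e \<subseteq> V"
  by (erule is_tree_edgeE) auto

lemma is_tree_card_edge: "is_tree V E \<Longrightarrow> e \<in> E \<Longrightarrow> card e = 2"
  by (erule is_tree_edgeE) auto

lemma is_tree_finite_edges: "is_tree V E \<Longrightarrow> finite E"
  by (meson Pow_iff finite_Pow_iff finite_subset is_tree_edge_subset is_tree_finite subsetI)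

lemma is_tree_card_vertices_pos: "is_tree V E \<Longrightarrow> card V \<ge> 1"
  unfolding is_tree_def by (simp add: Suc_leI card_gt_0_iff)

lemma is_tree_incident_edge:
  assumes T: "is_tree V E" and "E \<noteq> {}" and v: "v \<in> V"
  shows "\<exists>e\<in>E. v \<in> e"
proof -
  obtain p q where "{p, q} \<in> E" "p \<in> V" "q \<in> V" "p \<noteq> q"
    using assms by (metis equals0I is_tree_edgeE)
  then obtain w where w: "w \<in> V" "w \<noteq> v"
    by metis
  have "(v, w) \<in> {(p, q). {p, q} \<in> E}\<^sup>*"
    using is_tree_connected[OF T v w(1)] .
  then show ?thesis
    by (cases rule: converse_rtranclE) (use w in auto)
qed

lemma is_tree_add_leaf:
  assumes T: "is_tree V E" and u: "u \<in> V" and v: "v \<notin> V"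
  shows "is_tree (insert v V) (insert {u, v} E)"
proof -
  let ?R = "{(p, q). {p, q} \<in> insert {u, v} E}"
  have old: "(p, q) \<in> ?R\<^sup>*" if "p \<in> V" "q \<in> V" for p q
    using is_tree_connected[OF T that] rtrancl_mono[of "{(p, q). {p, q} \<in> E}" ?R] by blast
  have "(v, u) \<in> ?R\<^sup>*" "(u, v) \<in> ?R\<^sup>*"
    by (auto simp: insert_commute)
  then have "(p, u) \<in> ?R\<^sup>*" "(u, p) \<in> ?R\<^sup>*" if "p \<in> insert v V" for p
    using that old u by auto
  then have conn: "\<forall>p\<in>insert v V. \<forall>q\<in>insert v V. (p, q) \<in> ?R\<^sup>*"
    by (meson rtrancl_trans)
  have "{u, v} \<notin> E"
    using is_tree_edge_subset[OF T] v by blast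
  then have "card (insert {u, v} E) = card (insert v V) - 1"
    using is_tree_finite_edges[OF T] is_tree_finite[OF T] is_tree_card_edges[OF T]
      is_tree_card_vertices_pos[OF T] v by simp
  moreover have "\<forall>e\<in>insert {u, v} E. \<exists>p q. p \<in> insert v V \<and> q \<in> insert v V \<and> p \<noteq> q \<and> e = {p, q}"
    using u v by (blast elim: is_tree_edgeE[OF T])
  ultimately show ?thesis
    using conn is_tree_finite[OF T] unfolding is_tree_def by blast
qed

lemma sdeg_add_positive_leaf:
  fixes s :: "'a set \<Rightarrow> bool"
  assumes T: "is_tree V E" and u: "u \<in> V" and v: "v \<notin> V"
  defines "E' \<equiv> insert {u, v} E" and "s' \<equiv> s({u, v} := True)"
  shows "w \<in> V \<Longrightarrow> w \<noteq> u \<Longrightarrow> sdeg E' s' w = sdeg E s w"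
    and "sdeg E' s' v = 1"
    and "sdeg E' s' u = sdeg E s u + 1"
proof -
  have new: "{u, v} \<notin> E" and v_free: "\<And>e. e \<in> E \<Longrightarrow> v \<notin> e"
    using is_tree_edge_subset[OF T] v by blast+
  then have s': "\<And>e. e \<in> E \<Longrightarrow> s' e = s e"
    unfolding s'_def by auto
  show "sdeg E' s' w = sdeg E s w" if "w \<in> V" "w \<noteq> u"
  proof -
    have "w \<noteq> v"
      using that v by auto
    then have "{e\<in>E'. w \<in> e \<and> s' e} = {e\<in>E. w \<in> e \<and> s e}"
      "{e\<in>E'. w \<in> e \<and> \<not> s' e} = {e\<in>E. w \<in> e \<and> \<not> s e}"
      using s' that(2) unfolding E'_def by auto
    then show ?thesis
      unfolding sdeg_def by simp
  qed
  have "{e\<in>E'. v \<in> e \<and> s' e} = {{u, v}}" and no_negative: "{e\<in>E'. v \<in> e \<and> \<not> s' e} = {}"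
    using v_free unfolding E'_def s'_def by auto
  then show "sdeg E' s' v = 1"
    unfolding sdeg_def no_negative by simp
  have "{e\<in>E'. u \<in> e \<and> s' e} = insert {u, v} {e\<in>E. u \<in> e \<and> s e}"
    "{e\<in>E'. u \<in> e \<and> \<not> s' e} = {e\<in>E. u \<in> e \<and> \<not> s e}"
    using s' new unfolding E'_def s'_def by auto
  then show "sdeg E' s' u = sdeg E s u + 1"
    unfolding sdeg_def using new is_tree_finite_edges[OF T] by simp
qed

lemma add_positive_leaves:
  assumes T: "is_tree V E" and l: "l \<in> V" and inf: "infinite (UNIV :: 'a set)"
  shows "\<exists>(V' :: 'a set) E' s'. is_tree V' E' \<and> V \<subseteq> V' \<and> card V' = card V + m \<and>
     sdeg E' s' l = sdeg E s l + int m \<and> (\<forall>w\<in>V - {l}. sdeg E' s' w = sdeg E s w) \<and>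
     (\<forall>w\<in>V' - V. sdeg E' s' w = 1)"
proof (induction m)
  case 0
  then show ?case
    using T by auto
next
  case (Suc m)
  then obtain V' E' s' where IH: "is_tree V' E'" "V \<subseteq> V'" "card V' = card V + m"
     "sdeg E' s' l = sdeg E s l + int m" "\<forall>w\<in>V - {l}. sdeg E' s' w = sdeg E s w"
     "\<forall>w\<in>V' - V. sdeg E' s' w = 1"
    by blast
  obtain v where v: "v \<notin> V'"
    using ex_new_if_finite[OF inf is_tree_finite[OF IH(1)]] by blast
  have "l \<in> V'"
    using l IH(2) by auto
  note leaf = sdeg_add_positive_leaf[OF IH(1) this v, where s = s']
  show ?case
  proof (intro exI conjI ballI)
    show "is_tree (insert v V') (insert {l, v} E')"
      using is_tree_add_leaf[OF IH(1) \<open>l \<in> V'\<close> v] .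
    show "card (insert v V') = card V + Suc m"
      using IH(1,3) v by (simp add: is_tree_finite)
    show "sdeg (insert {l, v} E') (s'({l, v} := True)) w = sdeg E s w" if "w \<in> V - {l}" for w
      using that leaf(1) IH(2,5) by auto
    show "sdeg (insert {l, v} E') (s'({l, v} := True)) w = 1" if w: "w \<in> insert v V' - V" for w
    proof (cases "w = v")
      case False
      with w l have "w \<in> V' - V" "w \<noteq> l"
        by auto
      then show ?thesis
        using leaf(1) IH(6) by simp
    qed (use leaf(2) in simp)
    show "sdeg (insert {l, v} E') (s'({l, v} := True)) l = sdeg E s l + int (Suc m)"
      using leaf(3) IH(4) by simp
  qed (use IH(2) in auto)
qed

lemma ex_path_realizing_zero_one:
  "\<exists>(V :: nat set) E s. \<exists>l\<in>V. is_tree V E \<and> card V = 4 \<and> sdeg E s ` V = {0, 1} \<and> sdeg E s l = 1"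
proof -
  have "is_tree {0 :: nat} {}"
    unfolding is_tree_def by simp
  then have "is_tree {3, 2, 1, 0 :: nat} {{2, 3}, {1, 2}, {0, 1}}"
    by (intro is_tree_add_leaf) simp_all
  then have T: "is_tree {0, 1, 2, 3 :: nat} {{0, 1}, {1, 2}, {2, 3}}"
    by (simp add: insert_commute)
  have filter_insert: "{e \<in> insert f F. P e} = (if P f then insert f {e \<in> F. P e} else {e \<in> F. P e})"
    for f F and P :: "nat set \<Rightarrow> bool"
    by auto
  let ?s = "\<lambda>e. e \<noteq> {1, 2 :: nat}"
  have "sdeg {{0, 1}, {1, 2}, {2, 3}} ?s ` {0, 1, 2, 3} = {0, 1}"
    unfolding sdeg_def filter_insert by (simp add: doubleton_eq_iff insert_commute)
  moreover have "sdeg {{0, 1}, {1, 2}, {2, 3}} ?s 0 = 1"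
    unfolding sdeg_def filter_insert by (simp add: doubleton_eq_iff)
  ultimately show ?thesis
    using T by (intro exI bexI[of _ 0]) auto
qed

lemma ex_tree_realizing_zero_one_union:
  assumes "finite X" "\<forall>y\<in>X. y > (1 :: int)"
  shows "\<exists>(V :: nat set) E s. \<exists>l\<in>V. is_tree V E \<and> int (card V) = (\<Sum>y\<in>X. y - 1) + 4 \<and>
           sdeg E s ` V = {0, 1} \<union> X \<and> sdeg E s l = 1"
  using assms
proof (induction X rule: finite_induct)
  case empty
  then show ?case
    using ex_path_realizing_zero_one by simp
next
  case (insert y X)
  then obtain V :: "nat set" and E s l where IH: "l \<in> V" "is_tree V E"
    "int (card V) = (\<Sum>y\<in>X. y - 1) + 4" "sdeg E s ` V = {0, 1} \<union> X" "sdeg E s l = 1"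
    by auto
  define m where "m = nat (y - 1)"
  have m: "int m = y - 1" "m \<ge> 1"
    using insert.prems unfolding m_def by auto
  obtain V' E' s' where A: "is_tree V' E'" "V \<subseteq> V'" "card V' = card V + m"
     "sdeg E' s' l = y" "\<forall>w\<in>V - {l}. sdeg E' s' w = sdeg E s w" "\<forall>w\<in>V' - V. sdeg E' s' w = 1"
    using add_positive_leaves[OF IH(2,1) infinite_UNIV_nat, of m s] IH(5) m(1) by auto
  have "V' - V \<noteq> {}"
    using A(3) m(2) card_mono[OF is_tree_finite[OF IH(2)], of V'] by auto
  then obtain l' where l': "l' \<in> V' - V"
    by blast
  have split: "V' = (V - {l}) \<union> {l} \<union> (V' - V)"
    using A(2) IH(1) by auto
  have "sdeg E' s' ` (V - {l}) = sdeg E s ` (V - {l})"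
    using A(5) by (intro image_cong) auto
  moreover have "sdeg E' s' ` (V' - V) = {1}"
    using A(6) l' by force
  ultimately have "sdeg E' s' ` V' = sdeg E s ` (V - {l}) \<union> {y} \<union> {1}"
    using A(4) by (subst split) (simp only: image_Un image_insert image_empty)
  also have "\<dots> = sdeg E s ` V \<union> {y}"
    using IH(1,5) by (auto simp: insert_Diff)
  also have "\<dots> = {0, 1} \<union> insert y X"
    using IH(4) by auto
  finally have "sdeg E' s' ` V' = {0, 1} \<union> insert y X" .
  moreover have "int (card V') = (\<Sum>y\<in>insert y X. y - 1) + 4"
    using A(3) IH(3) m(1) insert.hyps by simp
  moreover have "l' \<in> V'" "sdeg E' s' l' = 1"
    using A(6) l' by auto
  ultimately show ?case
    using A(1) by blast
qed

lemma sigma_le_card: "realizes (V :: nat set) E s D \<Longrightarrow> sigma D \<le> card V"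
  unfolding sigma_def by (rule Least_le) blast

lemma sigma_zero_one_le:
  assumes "finite X" "\<forall>y\<in>X. y > (1 :: int)"
  shows "int (sigma ({0, 1} \<union> X)) \<le> (\<Sum>y\<in>X. y - 1) + 4"
proof -
  obtain V :: "nat set" and E s where "is_tree V E" "int (card V) = (\<Sum>y\<in>X. y - 1) + 4"
    "sdeg E s ` V = {0, 1} \<union> X"
    using ex_tree_realizing_zero_one_union[OF assms] by blast
  then show ?thesis
    using sigma_le_card[of V E s] unfolding realizes_def by fastforce
qed

lemma sum_card_incident_edges:
  assumes "finite V" "finite F" "\<And>e. e \<in> F \<Longrightarrow> e \<subseteq> V" "\<And>e. e \<in> F \<Longrightarrow> card e = 2"
  shows "(\<Sum>v\<in>V. card {e\<in>F. v \<in> e}) = 2 * card F"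
proof (rule sum_multicount[OF assms(1,2)], intro ballI)
  fix e assume "e \<in> F"
  then have "{v\<in>V. v \<in> e} = e"
    using assms(3) by auto
  then show "card {v\<in>V. v \<in> e} = 2"
    using assms(4) \<open>e \<in> F\<close> by simp
qed

lemma sum_sdeg_tree:
  assumes "is_tree V E"
  shows "(\<Sum>v\<in>V. sdeg E s v) = 2 * int (card V) - 2 - 4 * int (card {e\<in>E. \<not> s e})"
proof -
  have "(\<Sum>v\<in>V. card {e\<in>E. v \<in> e \<and> P e}) = 2 * card {e\<in>E. P e}" for P
  proof -
    have "{e\<in>E. v \<in> e \<and> P e} = {e\<in>{e\<in>E. P e}. v \<in> e}" for v
      by auto
    then show ?thesis
      using sum_card_incident_edges[of V "{e\<in>E. P e}"] is_tree_finite[OF assms]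
        is_tree_finite_edges[OF assms] is_tree_edge_subset[OF assms] is_tree_card_edge[OF assms]
      by simp
  qed
  note count = this[of s] this[of "\<lambda>e. \<not> s e"]
  have "(\<Sum>v\<in>V. sdeg E s v) = int (\<Sum>v\<in>V. card {e\<in>E. v \<in> e \<and> s e}) - int (\<Sum>v\<in>V. card {e\<in>E. v \<in> e \<and> \<not> s e})"
    unfolding sdeg_def sum_subtractf of_nat_sum ..
  then have sum_eq: "(\<Sum>v\<in>V. sdeg E s v) = 2 * int (card {e\<in>E. s e}) - 2 * int (card {e\<in>E. \<not> s e})"
    unfolding count by simp
  have "card E = card ({e\<in>E. s e} \<union> {e\<in>E. \<not> s e})"
    by (rule arg_cong[where f = card]) auto
  also have "\<dots> = card {e\<in>E. s e} + card {e\<in>E. \<not> s e}"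
    using is_tree_finite_edges[OF assms] by (intro card_Un_disjoint) auto
  finally have "card E = card {e\<in>E. s e} + card {e\<in>E. \<not> s e}" .
  then show ?thesis
    using sum_eq is_tree_card_edges[OF assms] is_tree_card_vertices_pos[OF assms] by linarith
qed

lemma sum_minus_one_lower_bound:
  fixes f :: "'a \<Rightarrow> int"
  assumes "finite V" "f ` V = {0, 1} \<union> X" "\<forall>y\<in>X. y > 1"
  shows "(\<Sum>y\<in>X. y - 1) - int (card {v\<in>V. f v = 0}) \<le> (\<Sum>v\<in>V. f v - 1)"
proof -
  let ?H = "{v\<in>V. f v \<ge> 2}"
  have "f v - 1 = (if f v \<ge> 2 then f v - 1 else 0) - (if f v = 0 then 1 else 0)" if "v \<in> V" for v
  proof -
    have "f v \<in> {0, 1} \<union> X"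
      using assms(2) that by blast
    then show ?thesis
      using assms(3) by auto
  qed
  then have "(\<Sum>v\<in>V. f v - 1) = (\<Sum>v\<in>V. if f v \<ge> 2 then f v - 1 else 0) - (\<Sum>v\<in>V. if f v = 0 then 1 else 0)"
    by (simp add: sum_subtractf[symmetric])
  also have "\<dots> = (\<Sum>v\<in>?H. f v - 1) - int (card {v\<in>V. f v = 0})"
    using sum.inter_filter[OF assms(1), where g = "\<lambda>v. f v - 1" and P = "\<lambda>v. f v \<ge> 2"]
      sum.inter_filter[OF assms(1), where g = "\<lambda>_. 1 :: int" and P = "\<lambda>v. f v = 0"] by simp
  finally have sum_eq: "(\<Sum>v\<in>V. f v - 1) = (\<Sum>v\<in>?H. f v - 1) - int (card {v\<in>V. f v = 0})" .
  have "X = f ` ?H"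
  proof
    show "X \<subseteq> f ` ?H"
    proof
      fix y assume "y \<in> X"
      moreover from this obtain v where "v \<in> V" "y = f v"
        using assms(2) by (metis UnCI imageE)
      ultimately show "y \<in> f ` ?H"
        using assms(3) by fastforce
    qed
    show "f ` ?H \<subseteq> X"
    proof
      fix y assume "y \<in> f ` ?H"
      then obtain v where "v \<in> V" "f v \<ge> 2" "y = f v"
        by blast
      moreover have "f v \<in> {0, 1} \<union> X"
        using assms(2) \<open>v \<in> V\<close> by blast
      ultimately show "y \<in> X"
        by auto
    qed
  qed
  moreover have "(\<Sum>y\<in>f ` ?H. y - 1) \<le> (\<Sum>v\<in>?H. f v - 1)"
    using sum_image_le[where g = "\<lambda>y. y - 1" and f = f and I = ?H] assms(1)
    by (simp add: comp_def)
  ultimately have "(\<Sum>y\<in>X. y - 1) \<le> (\<Sum>v\<in>?H. f v - 1)"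
    by simp
  then show ?thesis
    unfolding sum_eq by linarith
qed

lemma realizing_tree_card_lower_bound:
  assumes "is_tree V E" "sdeg E s ` V = {0, 1} \<union> X" "\<forall>y\<in>X. y > 1"
  shows "(\<Sum>y\<in>X. y - 1) + 4 * int (card {e\<in>E. \<not> s e}) \<le> int (card V) - 2 + int (card {v\<in>V. sdeg E s v = 0})"
  using sum_minus_one_lower_bound[OF is_tree_finite[OF assms(1)] assms(2,3)] sum_sdeg_tree[OF assms(1), of s]
  by (simp add: sum_subtractf)

lemma sdeg_zero_negative_edge:
  assumes "finite E" "e \<in> E" "v \<in> e" "sdeg E s v = 0"
  shows "\<exists>e\<in>E. v \<in> e \<and> \<not> s e"
proof (cases "s e")
  case True
  then have "card {e\<in>E. v \<in> e \<and> s e} \<noteq> 0"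
    using assms(1-3) by (auto simp: card_eq_0_iff)
  then have "card {e\<in>E. v \<in> e \<and> \<not> s e} \<noteq> 0"
    using assms(4) unfolding sdeg_def by linarith
  then show ?thesis
    by (metis (mono_tags, lifting) card.empty empty_Collect_eq)
qed (use assms in blast)

lemma zero_vertices_subset_negative_edges:
  assumes "is_tree V E" "E \<noteq> {}"
  shows "{v\<in>V. sdeg E s v = 0} \<subseteq> \<Union>{e\<in>E. \<not> s e}"
  using sdeg_zero_negative_edge[OF is_tree_finite_edges[OF assms(1)]] is_tree_incident_edge[OF assms]
  by blast

lemma card_Union_edges_le:
  assumes "\<And>e. e \<in> F \<Longrightarrow> card e = 2"
  shows "card (\<Union>F) \<le> 2 * card F"
proof -
  have "card (\<Union>F) \<le> (\<Sum>e\<in>F. card e)"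
    by (rule card_Union_le_sum_card)
  also have "\<dots> = 2 * card F"
    using assms by simp
  finally show ?thesis .
qed

lemma card_zero_vertices_le:
  assumes "is_tree V E" "E \<noteq> {}"
  shows "card {v\<in>V. sdeg E s v = 0} \<le> 2 * card {e\<in>E. \<not> s e}"
proof -
  have "finite (\<Union>{e\<in>E. \<not> s e})"
    using is_tree_edge_subset[OF assms(1)] is_tree_finite[OF assms(1)] by (blast intro: finite_subset)
  then have "card {v\<in>V. sdeg E s v = 0} \<le> card (\<Union>{e\<in>E. \<not> s e})"
    using zero_vertices_subset_negative_edges[OF assms] by (rule card_mono)
  also have "\<dots> \<le> 2 * card {e\<in>E. \<not> s e}"
    using is_tree_card_edge[OF assms(1)] by (intro card_Union_edges_le) auto
  finally show ?thesis .
qed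

theorem mainTheorem9:
  fixes n :: nat and x :: "nat \<Rightarrow> int" and D :: "int set"
    and V :: "'a set" and E :: "'a set set" and s :: "'a set \<Rightarrow> bool" and a b :: 'a
  assumes "n \<ge> 1"
    and "inj_on x {1..n}"
    and "\<forall>i\<in>{1..n}. x i > 1"
    and "D = {1, 0} \<union> x ` {1..n}"
    and "optimal V E s D"
    and "{a, b} \<in> E"
    and "\<not> s {a, b}"
  shows "sdeg E s a = 0 \<and> sdeg E s b = 0"
proof -
  define X where "X = x ` {1..n}"
  define N where "N = {e\<in>E. \<not> s e}"
  define Z where "Z = {v\<in>V. sdeg E s v = 0}"
  have D: "D = {0, 1} \<union> X" and X: "finite X" "\<forall>y\<in>X. y > 1"
    using assms(3,4) unfolding X_def by auto
  have T: "is_tree V E" and img: "sdeg E s ` V = {0, 1} \<union> X" and opt: "card V = sigma D"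
    using assms(5) D unfolding optimal_def realizes_def by auto
  have upper: "int (card V) \<le> (\<Sum>y\<in>X. y - 1) + 4"
    using sigma_zero_one_le[OF X] opt D by simp
  have lower: "(\<Sum>y\<in>X. y - 1) + 4 * int (card N) \<le> int (card V) - 2 + int (card Z)"
    using realizing_tree_card_lower_bound[OF T img X(2)] unfolding N_def Z_def .
  have Z_sub: "Z \<subseteq> \<Union>N" and Z_le: "card Z \<le> 2 * card N"
    using zero_vertices_subset_negative_edges[OF T] card_zero_vertices_le[OF T] assms(6)
    unfolding Z_def N_def by blast+
  have ab: "{a, b} \<in> N"
    using assms(6,7) unfolding N_def by simp
  moreover have "finite N"
    using is_tree_finite_edges[OF T] unfolding N_def by simp
  ultimately have "card N \<ge> 1"
    by (auto simp: Suc_le_eq card_gt_0_iff)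
  then have "card N = 1" "card Z \<ge> 2"
    using upper lower Z_le by linarith+
  then have "Z \<subseteq> {a, b}"
    using ab Z_sub by (auto simp: card_1_singleton_iff)
  then have "Z = {a, b}"
    using \<open>card Z \<ge> 2\<close> card_seteq[of "{a, b}" Z] is_tree_card_edge[OF T assms(6)] by simp
  then show ?thesis
    unfolding Z_def by auto
qed

end
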